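(* Let $\gamma_{sd},\gamma_{sr},\gamma_{rd}>0$ be the effective power gains of the source–destination, source–relay and relay–destination links, and let $P>0$ be a total power (spectral density). Define the direct-transmission (DT) rate $R^{DT}(P)=\log(1+\gamma_{sd}P)$ and the regenerative decode-and-forward (DF) rate \[ R^{DF}(P)=\max_{\substack{P_s,P_r\ge 0\\ \frac12 P_s+\frac12 P_r=P}}\ \min\Big\{\tfrac12\log\big(1+\gamma_{sr}P_s\big),\ \tfrac12\log\big(1+\gamma_{sd}P_s+\gamma_{rd}P_r\big)\Big\}. \] If $\gamma_{sr}<\gamma_{sd}$ or $\gamma_{rd}<\gamma_{sd}$, then $R^{DT}(P)>R^{DF}(P)$, i.e. the DT link supports a higher rate than the DF link with the same total power (the DF link is not useful).
   Context: Half-duplex regenerative (repetition-coding) decode-and-forward relaying: in the first half of the time the source transmits with power $P_s$ and the relay must decode; in the second half the relay transmits with power $P_r$, and the destination combines (maximal-ratio combining) both received signals. Powers are spectral densities and the factors $\tfrac12$ account for each node transmitting half the time; $\log$ denotes the logarithm (any fixed base). *)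

theory Defs
  imports "HOL-Analysis.Analysis"
begin

text \<open>Logarithm of a fixed base b > 1 (the paper allows any fixed base).\<close>

definition R_DT :: "real \<Rightarrow> real \<Rightarrow> real \<Rightarrow> real" where
  "R_DT b g_sd P = log b (1 + g_sd * P)"

definition DF_alloc :: "real \<Rightarrow> (real \<times> real) set" where
  "DF_alloc P = {(Ps, Pr). Ps \<ge> 0 \<and> Pr \<ge> 0 \<and> Ps / 2 + Pr / 2 = P}"

definition DF_obj :: "real \<Rightarrow> real \<Rightarrow> real \<Rightarrow> real \<Rightarrow> real \<times> real \<Rightarrow> real" where
  "DF_obj b g_sd g_sr g_rd = (\<lambda>(Ps, Pr).
     min ((1/2) * log b (1 + g_sr * Ps)) ((1/2) * log b (1 + g_sd * Ps + g_rd * Pr)))"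

text \<open>The maximum over the compact feasible set, written as a supremum.\<close>
definition R_DF :: "real \<Rightarrow> real \<Rightarrow> real \<Rightarrow> real \<Rightarrow> real \<Rightarrow> real" where
  "R_DF b g_sd g_sr g_rd P = (SUP a\<in>DF_alloc P. DF_obj b g_sd g_sr g_rd a)"

end

theory Submission
  imports Defs
begin

text \<open>Whichever relay link is weaker than the direct link, the corresponding branch of the
  minimum is at most what the direct link carries with the whole budget 2P used half the time,
  namely (1/2) log (1 + 2 g_sd P). Strict concavity of the logarithm, 1 + 2x < (1 + x)^2, makes
  this smaller than log (1 + g_sd P).\<close>

lemma half_log_one_plus_double_less:
  fixes b x :: real
  assumes "b > 1" and "x > 0"
  shows "(1/2) * log b (1 + 2 * x) < log b (1 + x)"
proof -
  have "1 + 2 * x < (1 + x)^2"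
    using assms(2) by (simp add: power2_eq_square algebra_simps)
  then have "log b (1 + 2 * x) < log b ((1 + x)^2)"
    using assms by (subst log_less_cancel_iff) auto
  also have "\<dots> = 2 * log b (1 + x)"
    using assms by (subst log_nat_power) auto
  finally show ?thesis by simp
qed

lemma DF_obj_le_full_power_direct:
  fixes b g_sd g_sr g_rd P Ps Pr :: real
  assumes "b > 1" and "g_sd > 0" and "g_sr > 0" and "g_rd > 0"
    and "g_sr < g_sd \<or> g_rd < g_sd"
    and "(Ps, Pr) \<in> DF_alloc P"
  shows "DF_obj b g_sd g_sr g_rd (Ps, Pr) \<le> (1/2) * log b (1 + 2 * g_sd * P)"
proof -
  have alloc: "Ps \<ge> 0" "Pr \<ge> 0" "Ps + Pr = 2 * P"
    using assms(6) unfolding DF_alloc_def by auto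
  have log_mono: "log b (1 + y) \<le> log b (1 + 2 * g_sd * P)"
    if "0 \<le> y" "y \<le> 2 * g_sd * P" for y
    using assms(1) that by (subst log_le_cancel_iff) auto
  from assms(5) show ?thesis
  proof
    assume "g_sr < g_sd"
    then have "g_sr * Ps \<le> g_sd * Ps"
      using alloc by (simp add: mult_right_mono)
    also have "\<dots> \<le> g_sd * (Ps + Pr)"
      using alloc assms(2) by simp
    finally have "g_sr * Ps \<le> 2 * g_sd * P"
      using alloc by simp
    then show ?thesis
      using log_mono[of "g_sr * Ps"] alloc assms(3) unfolding DF_obj_def by simp
  next
    assume "g_rd < g_sd"
    then have "g_rd * Pr \<le> g_sd * Pr"
      using alloc by (simp add: mult_right_mono)
    then have "g_sd * Ps + g_rd * Pr \<le> g_sd * (Ps + Pr)"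
      by (simp add: distrib_left)
    then have "g_sd * Ps + g_rd * Pr \<le> 2 * g_sd * P"
      using alloc by simp
    then show ?thesis
      using log_mono[of "g_sd * Ps + g_rd * Pr"] alloc assms(2,4)
      unfolding DF_obj_def by (simp add: add.assoc)
  qed
qed

theorem proposition1:
  fixes b g_sd g_sr g_rd P :: real
  assumes "b > 1"
    and "g_sd > 0" and "g_sr > 0" and "g_rd > 0" and "P > 0"
    and "g_sr < g_sd \<or> g_rd < g_sd"
  shows "R_DT b g_sd P > R_DF b g_sd g_sr g_rd P"
proof -
  have "(2 * P, 0) \<in> DF_alloc P"
    using assms(5) unfolding DF_alloc_def by auto
  then have "R_DF b g_sd g_sr g_rd P \<le> (1/2) * log b (1 + 2 * (g_sd * P))"
    unfolding R_DF_def
    using DF_obj_le_full_power_direct[OF assms(1-4,6)]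
    by (intro cSUP_least) (auto simp: mult.assoc)
  also have "\<dots> < R_DT b g_sd P"
    unfolding R_DT_def using assms by (intro half_log_one_plus_double_less) auto
  finally show ?thesis .
qed

end
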